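(* Let $\Gamma$ be as below. (1) If $q=\prod_i p_i^{m_i}$ is the prime factorization of the positive integer $q$, then the natural map $\Gamma/\Gamma(q)\to\prod_i\Gamma/\Gamma(p_i^{m_i})$ is an isomorphism. (2) If $\gcd(q,6)=1$, then $\Gamma/\Gamma(q)=SL(2,\mathbb{Z}[\sqrt2 i]/(q))$, i.e. the reduction map $\Gamma\to SL(2,\mathbb{Z}[\sqrt2 i]/(q))$ is surjective. (3) If $l\ge3$, the kernel of the reduction map $\Gamma/\Gamma(2^l)\to\Gamma/\Gamma(8)$ equals the kernel of $SL(2,\mathbb{Z}[\sqrt2 i]/(2^l))\to SL(2,\mathbb{Z}[\sqrt2 i]/(8))$; if $l\ge1$, the kernel of $\Gamma/\Gamma(3^l)\to\Gamma/\Gamma(3)$ equals the kernel of $SL(2,\mathbb{Z}[\sqrt2 i]/(3^l))\to SL(2,\mathbb{Z}[\sqrt2 i]/(3))$.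
   Context: Here $\sqrt{2}i=\sqrt{-2}$ and $M_1=\begin{pmatrix}1&2\\-2&-3\end{pmatrix}$, $M_2=\begin{pmatrix}1-2\sqrt2 i&2\\2+4\sqrt2 i&-3+2\sqrt2 i\end{pmatrix}$, $M_3=\begin{pmatrix}1&0\\-4&1\end{pmatrix}$, $M_4=\begin{pmatrix}-1+2\sqrt2 i&-4\\-4\sqrt2 i&7-2\sqrt2 i\end{pmatrix}$, $M_5=\begin{pmatrix}-1&2\\2&-5\end{pmatrix}$, $M_6=\begin{pmatrix}1+2\sqrt2 i&-2\\-6-4\sqrt2 i&5-2\sqrt2 i\end{pmatrix}$, $M_7=\begin{pmatrix}-1-2\sqrt2 i&4\\4+4\sqrt2 i&-9+2\sqrt2 i\end{pmatrix}$. $\Gamma=\langle M_1,\dots,M_7\rangle\subset SL(2,\mathbb{Z}[\sqrt2 i])$. $\Gamma(q)$ is the set of $\gamma\in\Gamma$ with $\gamma\equiv I\pmod{q\mathbb{Z}[\sqrt2 i]}$, and $\Gamma/\Gamma(q)$ is identified with the image of $\Gamma$ in $SL(2,\mathbb{Z}[\sqrt2 i]/(q))$. *)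

theory Defs
  imports Main "HOL-Computational_Algebra.Primes" "HOL-Library.FuncSet"
begin

text \<open>Elements of Z[sqrt(-2)]: a pair (a,b) stands for a + b*sqrt(-2).\<close>
type_synonym zs = "int \<times> int"

fun zs_add :: "zs \<Rightarrow> zs \<Rightarrow> zs" where
  "zs_add (a,b) (c,d) = (a + c, b + d)"

fun zs_mul :: "zs \<Rightarrow> zs \<Rightarrow> zs" where
  "zs_mul (a,b) (c,d) = (a*c - 2*b*d, a*d + b*c)"

fun zs_neg :: "zs \<Rightarrow> zs" where
  "zs_neg (a,b) = (-a, -b)"

fun zs_red :: "int \<Rightarrow> zs \<Rightarrow> zs" where
  "zs_red q (a,b) = (a mod q, b mod q)"

datatype mat2 = Mat zs zs zs zs

fun mmul :: "mat2 \<Rightarrow> mat2 \<Rightarrow> mat2" where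
  "mmul (Mat a b c d) (Mat e f g h) =
     Mat (zs_add (zs_mul a e) (zs_mul b g)) (zs_add (zs_mul a f) (zs_mul b h))
         (zs_add (zs_mul c e) (zs_mul d g)) (zs_add (zs_mul c f) (zs_mul d h))"

fun mdet :: "mat2 \<Rightarrow> zs" where
  "mdet (Mat a b c d) = zs_add (zs_mul a d) (zs_neg (zs_mul b c))"

text \<open>Inverse of a determinant-one matrix (adjugate).\<close>
fun minv :: "mat2 \<Rightarrow> mat2" where
  "minv (Mat a b c d) = Mat d (zs_neg b) (zs_neg c) a"

definition mI :: mat2 where "mI = Mat (1,0) (0,0) (0,0) (1,0)"

fun mred :: "int \<Rightarrow> mat2 \<Rightarrow> mat2" where
  "mred q (Mat a b c d) = Mat (zs_red q a) (zs_red q b) (zs_red q c) (zs_red q d)"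

definition M1 :: mat2 where "M1 = Mat (1,0) (2,0) (-2,0) (-3,0)"
definition M2 :: mat2 where "M2 = Mat (1,-2) (2,0) (2,4) (-3,2)"
definition M3 :: mat2 where "M3 = Mat (1,0) (0,0) (-4,0) (1,0)"
definition M4 :: mat2 where "M4 = Mat (-1,2) (-4,0) (0,-4) (7,-2)"
definition M5 :: mat2 where "M5 = Mat (-1,0) (2,0) (2,0) (-5,0)"
definition M6 :: mat2 where "M6 = Mat (1,2) (-2,0) (-6,-4) (5,-2)"
definition M7 :: mat2 where "M7 = Mat (-1,-2) (4,0) (4,4) (-9,2)"

inductive_set Gamma :: "mat2 set" where
  id: "mI \<in> Gamma"
| gen: "M \<in> {M1, M2, M3, M4, M5, M6, M7} \<Longrightarrow> M \<in> Gamma"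
| mult: "A \<in> Gamma \<Longrightarrow> B \<in> Gamma \<Longrightarrow> mmul A B \<in> Gamma"
| inv: "A \<in> Gamma \<Longrightarrow> minv A \<in> Gamma"

text \<open>Gamma/Gamma(q), identified with the image of Gamma in SL(2, Z[sqrt(-2)]/(q)).\<close>
definition GammaMod :: "int \<Rightarrow> mat2 set" where
  "GammaMod q = mred q ` Gamma"

text \<open>SL(2, Z[sqrt(-2)]/(q)), elements given by canonical representatives.\<close>
definition SL2mod :: "int \<Rightarrow> mat2 set" where
  "SL2mod q = {A. mred q A = A \<and> zs_red q (mdet A) = zs_red q (1,0)}"

end

theory Submission
  imports Defs
begin

text \<open>The group \<open>\<Gamma>\<close> contains the unipotent elements \<open>upper (-8)\<close>, \<open>lower (-4)\<close> and a conjugate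
  \<open>unip (-4)\<close> of \<open>upper (-4)\<close>; their powers give, modulo \<open>q\<close> prime to 6, all elementary matrices
  with entries in \<open>\<int>\<close> and in \<open>\<int>\<surd>-2\<close>, while staying trivial modulo any auxiliary modulus \<open>Q\<close>
  prime to \<open>q\<close>. Since \<open>\<int>[\<surd>-2]\<close> is norm-Euclidean, elementary matrices generate \<open>SL\<^sub>2\<close> modulo \<open>q\<close>
  (strong approximation).

  At 2 and 3 one checks, with explicit words in the generators, that \<open>\<Gamma>\<close> fills the first
  congruence layer above level 8 (resp. 3). A Hensel argument (\<open>g \<equiv> 1 + c X\<close> implies
  \<open>g\<^sup>p \<equiv> 1 + p c X\<close> one level higher) then fills every deeper layer, and raising to suitable
  powers makes these lifts trivial at the other prime.

  For the Chinese remainder statement one approximates at 2 and 3 simultaneously (using that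
  \<open>\<Gamma> \<equiv> 1\<close> modulo 2) and then adds the remaining primes one at a time by strong approximation,
  with the cofactor as auxiliary modulus.\<close>

section \<open>Arithmetic in \<open>\<int>[\<surd>-2]\<close> and \<open>2 \<times> 2\<close> matrices\<close>

text \<open>\<open>Z a b\<close> stands for \<open>a + b\<surd>-2\<close>.\<close>
datatype zsqrt2 = Z (re: int) (im: int)

instantiation zsqrt2 :: comm_ring_1
begin
definition "zero_zsqrt2 = Z 0 0"
definition "one_zsqrt2 = Z 1 0"
definition "plus_zsqrt2 x y = Z (re x + re y) (im x + im y)"
definition "minus_zsqrt2 x y = Z (re x - re y) (im x - im y)"
definition "uminus_zsqrt2 x = Z (- re x) (- im x)"
definition "times_zsqrt2 x y = Z (re x * re y - 2 * im x * im y) (re x * im y + im x * re y)"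
instance
  by standard (auto simp: zero_zsqrt2_def one_zsqrt2_def plus_zsqrt2_def minus_zsqrt2_def
      uminus_zsqrt2_def times_zsqrt2_def algebra_simps zsqrt2.expand)
end

lemma zsqrt2_arith [simp]:
  "Z a b + Z c d = Z (a + c) (b + d)" "Z a b - Z c d = Z (a - c) (b - d)" "- Z a b = Z (- a) (- b)"
  "Z a b * Z c d = Z (a * c - 2 * b * d) (a * d + b * c)"
  by (simp_all add: plus_zsqrt2_def minus_zsqrt2_def uminus_zsqrt2_def times_zsqrt2_def)

lemma zsqrt2_zero_one: "0 = Z 0 0" "1 = Z 1 0"
  by (simp_all add: zero_zsqrt2_def one_zsqrt2_def)

lemma of_nat_zsqrt2: "of_nat n = Z (int n) 0"
  by (induct n) (auto simp: zsqrt2_zero_one)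

lemma of_int_zsqrt2: "of_int n = Z n 0"
  by (cases n rule: int_cases) (auto simp: of_nat_zsqrt2 zsqrt2_zero_one)

fun znorm :: "zsqrt2 \<Rightarrow> int" where
  "znorm (Z a b) = a\<^sup>2 + 2 * b\<^sup>2"

lemma znorm_mult: "znorm (x * y) = znorm x * znorm y"
  by (cases x; cases y) (simp add: power2_eq_square algebra_simps)

lemma znorm_nonneg: "znorm x \<ge> 0"
  by (cases x) simp

lemma znorm_pos: "x \<noteq> 0 \<Longrightarrow> znorm x > 0"
  by (cases x) (auto simp: zsqrt2_zero_one add_pos_nonneg add_nonneg_pos)

lemma nearest_multiple_bound:
  fixes u n :: int
  assumes "n > 0"
  shows "4 * (u - n * ((2 * u + n) div (2 * n)))\<^sup>2 \<le> n\<^sup>2"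
proof -
  define t where "t = (2 * u + n) div (2 * n)"
  define r where "r = (2 * u + n) mod (2 * n)"
  have e: "2 * u + n = 2 * n * t + r"
    unfolding t_def r_def by (metis div_mult_mod_eq mult.commute)
  have "0 \<le> r" "r < 2 * n"
    using assms unfolding r_def by simp_all
  then have "\<bar>2 * (u - n * t)\<bar> \<le> \<bar>n\<bar>"
    using e assms by (simp add: abs_le_iff algebra_simps)
  then have "(2 * (u - n * t))\<^sup>2 \<le> n\<^sup>2"
    using abs_le_square_iff by blast
  then show ?thesis
    unfolding t_def by (simp add: power2_eq_square algebra_simps)
qed

text \<open>Z[\<surd>-2] is norm-Euclidean: divide \<open>a * conj c\<close> by \<open>znorm c\<close> and round both
  coordinates to the nearest integer; each rounding error contributes at most a quarter.\<close>
lemma zsqrt2_euclidean: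
  assumes "c \<noteq> 0"
  shows "\<exists>t. znorm (a - t * c) < znorm c"
proof -
  obtain c1 c2 where c: "c = Z c1 c2" by (cases c)
  define n where "n = znorm c"
  have n: "n > 0" using znorm_pos assms n_def by blast
  obtain u v where uv: "a * Z c1 (- c2) = Z u v" by (cases "a * Z c1 (- c2)")
  define t1 where "t1 = (2 * u + n) div (2 * n)"
  define t2 where "t2 = (2 * v + n) div (2 * n)"
  define t where "t = Z t1 t2"
  have cc: "c * Z c1 (- c2) = Z n 0"
    by (simp add: c n_def power2_eq_square)
  have "(a - t * c) * Z c1 (- c2) = a * Z c1 (- c2) - t * (c * Z c1 (- c2))"
    by (simp add: algebra_simps)
  also have "\<dots> = Z (u - n * t1) (v - n * t2)"
    by (simp add: uv cc t_def algebra_simps)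
  finally have e: "znorm (a - t * c) * n = (u - n * t1)\<^sup>2 + 2 * (v - n * t2)\<^sup>2"
    using znorm_mult[of "a - t * c" "Z c1 (- c2)"] by (simp add: n_def c)
  have "4 * (u - n * t1)\<^sup>2 \<le> n\<^sup>2" "4 * (v - n * t2)\<^sup>2 \<le> n\<^sup>2"
    unfolding t1_def t2_def using nearest_multiple_bound n by blast+
  then have "4 * (znorm (a - t * c) * n) < 4 * (n * n)"
    unfolding e using mult_pos_pos[OF n n] by (simp add: power2_eq_square)
  then have "znorm (a - t * c) < n"
    using n by (simp add: mult_less_cancel_right)
  then show ?thesis
    unfolding n_def by blast
qed

datatype mat22 = M zsqrt2 zsqrt2 zsqrt2 zsqrt2

instantiation mat22 :: ring_1
begin
fun plus_mat22 where
  "plus_mat22 (M a b c d) (M e f g h) = M (a + e) (b + f) (c + g) (d + h)"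
fun minus_mat22 where
  "minus_mat22 (M a b c d) (M e f g h) = M (a - e) (b - f) (c - g) (d - h)"
fun uminus_mat22 where
  "uminus_mat22 (M a b c d) = M (- a) (- b) (- c) (- d)"
fun times_mat22 where
  "times_mat22 (M a b c d) (M e f g h) =
     M (a * e + b * g) (a * f + b * h) (c * e + d * g) (c * f + d * h)"
definition "zero_mat22 = M 0 0 0 0"
definition "one_mat22 = M 1 0 0 1"
instance
proof
  fix x y z :: mat22
  show "x + y + z = x + (y + z)" by (cases x; cases y; cases z) (simp add: algebra_simps)
  show "x + y = y + x" by (cases x; cases y) (simp add: algebra_simps)
  show "0 + x = x" by (cases x) (simp add: zero_mat22_def)
  show "- x + x = 0" by (cases x) (simp add: zero_mat22_def)
  show "x - y = x + - y" by (cases x; cases y) simp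
  show "x * y * z = x * (y * z)" by (cases x; cases y; cases z) (simp add: algebra_simps)
  show "1 * x = x" by (cases x) (simp add: one_mat22_def)
  show "x * 1 = x" by (cases x) (simp add: one_mat22_def)
  show "(x + y) * z = x * z + y * z" by (cases x; cases y; cases z) (simp add: algebra_simps)
  show "x * (y + z) = x * y + x * z" by (cases x; cases y; cases z) (simp add: algebra_simps)
  show "(0::mat22) \<noteq> 1" by (simp add: zero_mat22_def one_mat22_def)
qed
end

lemma mat22_zero_one: "(0::mat22) = M 0 0 0 0" "(1::mat22) = M 1 0 0 1"
  by (simp_all add: zero_mat22_def one_mat22_def)

lemma of_nat_mat22: "(of_nat n :: mat22) = M (of_nat n) 0 0 (of_nat n)"
  by (induct n) (simp_all add: mat22_zero_one)

lemma of_int_mat22: "(of_int n :: mat22) = M (of_int n) 0 0 (of_int n)"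
  by (cases n rule: int_cases) (simp_all add: of_nat_mat22 mat22_zero_one)

fun det :: "mat22 \<Rightarrow> zsqrt2" where
  "det (M a b c d) = a * d - b * c"

fun trace :: "mat22 \<Rightarrow> zsqrt2" where
  "trace (M a b c d) = a + d"

fun adj :: "mat22 \<Rightarrow> mat22" where
  "adj (M a b c d) = M d (- b) (- c) a"

definition upper :: "zsqrt2 \<Rightarrow> mat22" where
  "upper t = M 1 t 0 1"

definition lower :: "zsqrt2 \<Rightarrow> mat22" where
  "lower t = M 1 0 t 1"

lemma det_mult: "det (A * B) = det A * det B"
  by (cases A; cases B) (simp add: algebra_simps)

lemma det_adj: "det (adj A) = det A"
  by (cases A) (simp add: algebra_simps)

lemma adj_one [simp]: "adj 1 = 1"
  by (simp add: mat22_zero_one)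

lemma mult_adj: "det A = 1 \<Longrightarrow> A * adj A = 1"
  and adj_mult: "det A = 1 \<Longrightarrow> adj A * A = 1"
  by (cases A; simp add: algebra_simps mat22_zero_one)+

lemma det_one_plus_of_int:
  "det (1 + of_int c * X) = 1 + of_int c * trace X + of_int (c * c) * det X"
  by (cases X) (simp add: of_int_mat22 mat22_zero_one algebra_simps)

lemma upper_add: "upper x * upper y = upper (x + y)"
  and lower_add: "lower x * lower y = lower (x + y)"
  by (simp_all add: upper_def lower_def algebra_simps)

lemma upper_power: "upper x ^ k = upper (of_nat k * x)"
  by (induct k) (simp_all add: upper_add algebra_simps, simp add: upper_def mat22_zero_one)

lemma lower_power: "lower x ^ k = lower (of_nat k * x)"
  by (induct k) (simp_all add: lower_add algebra_simps, simp add: lower_def mat22_zero_one)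

section \<open>Congruences\<close>

text \<open>Congruence modulo the two-sided ideal \<open>n R\<close>; it is one because \<open>of_int n\<close> is central.\<close>
definition mcong :: "int \<Rightarrow> 'a::ring_1 \<Rightarrow> 'a \<Rightarrow> bool" where
  "mcong n a b \<longleftrightarrow> (\<exists>c. a = b + of_int n * c)"

lemma mcongI: "a = b + of_int n * c \<Longrightarrow> mcong n a b"
  unfolding mcong_def by blast

lemma mcongE:
  assumes "mcong n a b"
  obtains c where "a = b + of_int n * c"
  using assms unfolding mcong_def by blast

lemma mcong_refl [simp]: "mcong n a a"
  by (rule mcongI[of _ _ _ 0]) simp

lemma mcong_sym: "mcong n a b \<Longrightarrow> mcong n b a"
  by (erule mcongE, rule mcongI[of _ _ _ "- _"]) simp

lemma mcong_trans: "mcong n a b \<Longrightarrow> mcong n b c \<Longrightarrow> mcong n a c"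
  by (elim mcongE, rule mcongI[of _ _ _ "_ + _"]) (simp add: distrib_left add.assoc)

lemma mcong_add: "mcong n a a' \<Longrightarrow> mcong n b b' \<Longrightarrow> mcong n (a + b) (a' + b')"
  by (elim mcongE, rule mcongI[of _ _ _ "_ + _"]) (simp add: algebra_simps)

lemma mcong_minus: "mcong n a a' \<Longrightarrow> mcong n (- a) (- a')"
  by (erule mcongE, rule mcongI[of _ _ _ "- _"]) simp

lemma mcong_diff: "mcong n a a' \<Longrightarrow> mcong n b b' \<Longrightarrow> mcong n (a - b) (a' - b')"
  using mcong_add[OF _ mcong_minus, of n a a' b b'] by simp

lemma mcong_mult:
  assumes "mcong n a a'" "mcong n b b'"
  shows "mcong n (a * b) (a' * b')"
proof -
  obtain c d where a: "a = a' + of_int n * c" and b: "b = b' + of_int n * d"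
    using assms unfolding mcong_def by blast
  have "a' * (of_int n * d) = of_int n * (a' * d)"
    by (metis mult.assoc mult_of_int_commute)
  then have "a * b = a' * b' + of_int n * (a' * d + c * b)"
    unfolding a b by (simp add: algebra_simps)
  then show ?thesis
    unfolding mcong_def by blast
qed

lemma mcong_power: "mcong n a b \<Longrightarrow> mcong n (a ^ k) (b ^ k)"
  by (induct k) (auto intro: mcong_mult)

lemma mcong_dvd: "m dvd n \<Longrightarrow> mcong n a b \<Longrightarrow> mcong m a b"
  by (elim dvdE mcongE, rule mcongI[of _ _ _ "of_int _ * _"]) (simp add: mult.assoc)

lemma mcong_add_multiple: "m dvd c \<Longrightarrow> mcong m (x + of_int c * w) x"
  by (elim dvdE, rule mcongI[of _ _ _ "of_int _ * w"]) (simp add: mult.assoc)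

lemma mcong_one_plus_scaled:
  "mcong m x y \<Longrightarrow> mcong (c * m) (1 + of_int c * x) (1 + of_int c * y)"
  by (erule mcongE, rule mcongI) (simp add: distrib_left mult.assoc add.assoc)

lemma mcong_zsqrt2_iff: "mcong n (Z a b) (Z c d) \<longleftrightarrow> n dvd a - c \<and> n dvd b - d"
proof
  assume "mcong n (Z a b) (Z c d)"
  then obtain k where "Z a b = Z c d + Z n 0 * k"
    by (auto simp: of_int_zsqrt2 elim: mcongE)
  then show "n dvd a - c \<and> n dvd b - d"
    by (cases k) auto
next
  assume "n dvd a - c \<and> n dvd b - d"
  then obtain u v where "a - c = n * u" "b - d = n * v"
    by (meson dvdE)
  then show "mcong n (Z a b) (Z c d)"
    by (intro mcongI[of _ _ _ "Z u v"]) (simp add: of_int_zsqrt2 algebra_simps)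
qed

lemma mcong_mat22_iff:
  "mcong n (M a b c d) (M e f g h) \<longleftrightarrow> mcong n a e \<and> mcong n b f \<and> mcong n c g \<and> mcong n d h"
  (is "?lhs \<longleftrightarrow> ?rhs")
proof
  assume ?lhs
  then obtain k where "M a b c d = M e f g h + of_int n * k"
    by (elim mcongE)
  then show ?rhs
    by (cases k) (auto simp: of_int_mat22 intro: mcongI)
next
  assume ?rhs
  then obtain k1 k2 k3 k4 where
    "a = e + of_int n * k1" "b = f + of_int n * k2" "c = g + of_int n * k3" "d = h + of_int n * k4"
    by (auto elim!: mcongE)
  then show ?lhs
    by (intro mcongI[of _ _ _ "M k1 k2 k3 k4"]) (simp add: of_int_mat22)
qed

lemma mcong_adj: "mcong n A A' \<Longrightarrow> mcong n (adj A) (adj A')"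
  by (cases A; cases A') (auto simp: mcong_mat22_iff intro!: mcong_minus)

lemma mcong_det: "mcong n A A' \<Longrightarrow> mcong n (det A) (det A')"
  by (cases A; cases A') (auto simp: mcong_mat22_iff intro!: mcong_diff mcong_mult)

section \<open>The group \<open>\<Gamma>\<close>\<close>

fun of_zs :: "zs \<Rightarrow> zsqrt2" where
  "of_zs (a, b) = Z a b"

fun of_mat2 :: "mat2 \<Rightarrow> mat22" where
  "of_mat2 (Mat a b c d) = M (of_zs a) (of_zs b) (of_zs c) (of_zs d)"

lemma of_zs_add: "of_zs (zs_add x y) = of_zs x + of_zs y"
  and of_zs_mul: "of_zs (zs_mul x y) = of_zs x * of_zs y"
  and of_zs_neg: "of_zs (zs_neg x) = - of_zs x"
  by (cases x; cases y; simp)+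

lemma of_mat2_mmul: "of_mat2 (mmul A B) = of_mat2 A * of_mat2 B"
  by (cases A; cases B) (simp add: of_zs_add of_zs_mul)

lemma of_mat2_minv: "of_mat2 (minv A) = adj (of_mat2 A)"
  by (cases A) (simp add: of_zs_neg)

lemma of_mat2_mI: "of_mat2 mI = 1"
  by (simp add: mI_def mat22_zero_one zsqrt2_zero_one)

lemma of_zs_mdet: "of_zs (mdet A) = det (of_mat2 A)"
  by (cases A) (simp add: of_zs_add of_zs_mul of_zs_neg)

lemma zs_red_eq_iff: "zs_red q x = zs_red q y \<longleftrightarrow> mcong q (of_zs x) (of_zs y)"
  by (cases x; cases y) (simp add: mcong_zsqrt2_iff mod_eq_dvd_iff)

lemma zs_red_eq_one_iff: "zs_red q x = zs_red q (1, 0) \<longleftrightarrow> mcong q (of_zs x) 1"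
  unfolding zs_red_eq_iff by (simp add: zsqrt2_zero_one)

lemma mred_eq_iff: "mred q A = mred q B \<longleftrightarrow> mcong q (of_mat2 A) (of_mat2 B)"
  by (cases A; cases B) (simp add: mcong_mat22_iff zs_red_eq_iff[symmetric])

lemma zs_red_zs_red: "m dvd n \<Longrightarrow> zs_red m (zs_red n x) = zs_red m x"
  by (cases x) (simp add: mod_mod_cancel)

lemma mred_mred: "m dvd n \<Longrightarrow> mred m (mred n A) = mred m A"
  by (cases A) (simp add: zs_red_zs_red)

lemma mred_idem: "mred q (mred q A) = mred q A"
  by (simp add: mred_mred)

lemma mcong_mred: "mcong q (of_mat2 (mred q A)) (of_mat2 A)"
  using mred_eq_iff[of q "mred q A" A] by (simp add: mred_idem)

definition Gam :: "mat22 set" where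
  "Gam = of_mat2 ` Gamma"

definition "g1 = M (Z 1 0) (Z 2 0) (Z (-2) 0) (Z (-3) 0)"
definition "g2 = M (Z 1 (-2)) (Z 2 0) (Z 2 4) (Z (-3) 2)"
definition "g3 = M (Z 1 0) (Z 0 0) (Z (-4) 0) (Z 1 0)"
definition "g4 = M (Z (-1) 2) (Z (-4) 0) (Z 0 (-4)) (Z 7 (-2))"
definition "g5 = M (Z (-1) 0) (Z 2 0) (Z 2 0) (Z (-5) 0)"
definition "g6 = M (Z 1 2) (Z (-2) 0) (Z (-6) (-4)) (Z 5 (-2))"
definition "g7 = M (Z (-1) (-2)) (Z 4 0) (Z 4 4) (Z (-9) 2)"

lemmas generator_defs = g1_def g2_def g3_def g4_def g5_def g6_def g7_def

lemma of_mat2_generators: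
  "of_mat2 M1 = g1" "of_mat2 M2 = g2" "of_mat2 M3 = g3" "of_mat2 M4 = g4"
  "of_mat2 M5 = g5" "of_mat2 M6 = g6" "of_mat2 M7 = g7"
  by (simp_all add: M1_def M2_def M3_def M4_def M5_def M6_def M7_def generator_defs)

lemma Gam_one: "1 \<in> Gam"
  unfolding Gam_def using Gamma.id of_mat2_mI by force

lemma Gam_generators: "g1 \<in> Gam" "g2 \<in> Gam" "g3 \<in> Gam" "g4 \<in> Gam" "g5 \<in> Gam" "g6 \<in> Gam" "g7 \<in> Gam"
  unfolding Gam_def of_mat2_generators[symmetric] by (auto intro!: imageI Gamma.gen)

lemma Gam_mult:
  assumes "a \<in> Gam" "b \<in> Gam"
  shows "a * b \<in> Gam"
proof -
  obtain x y where "x \<in> Gamma" "y \<in> Gamma" "a = of_mat2 x" "b = of_mat2 y"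
    using assms unfolding Gam_def by blast
  then show ?thesis
    unfolding Gam_def by (metis Gamma.mult image_eqI of_mat2_mmul)
qed

lemma Gam_adj:
  assumes "a \<in> Gam"
  shows "adj a \<in> Gam"
proof -
  obtain x where "x \<in> Gamma" "a = of_mat2 x"
    using assms unfolding Gam_def by blast
  then show ?thesis
    unfolding Gam_def by (metis Gamma.inv image_eqI of_mat2_minv)
qed

lemma Gam_power: "a \<in> Gam \<Longrightarrow> a ^ k \<in> Gam"
  by (induct k) (auto intro: Gam_one Gam_mult)

lemma Gam_induct [consumes 1, case_names one g1 g2 g3 g4 g5 g6 g7 mult adj]:
  assumes "g \<in> Gam" "P 1" "P g1" "P g2" "P g3" "P g4" "P g5" "P g6" "P g7"
    "\<And>a b. a \<in> Gam \<Longrightarrow> b \<in> Gam \<Longrightarrow> P a \<Longrightarrow> P b \<Longrightarrow> P (a * b)"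
    "\<And>a. a \<in> Gam \<Longrightarrow> P a \<Longrightarrow> P (adj a)"
  shows "P g"
proof -
  obtain x where x: "x \<in> Gamma" "g = of_mat2 x"
    using assms(1) unfolding Gam_def by auto
  have "P (of_mat2 x)" using x(1)
  proof (induct rule: Gamma.induct)
    case (gen M)
    then show ?case using assms(3-9) of_mat2_generators by auto
  next
    case (mult A B)
    then show ?case using assms(10)[of "of_mat2 A" "of_mat2 B"] of_mat2_mmul Gam_def by auto
  next
    case (inv A)
    then show ?case using assms(11)[of "of_mat2 A"] of_mat2_minv Gam_def by auto
  qed (use assms(2) of_mat2_mI in simp)
  then show ?thesis using x by simp
qed

lemma Gam_det: "g \<in> Gam \<Longrightarrow> det g = 1"
  by (induct rule: Gam_induct) (simp_all add: det_mult det_adj generator_defs mat22_zero_one zsqrt2_zero_one)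

lemma Gam_mult_adj: "g \<in> Gam \<Longrightarrow> g * adj g = 1"
  and Gam_adj_mult: "g \<in> Gam \<Longrightarrow> adj g * g = 1"
  by (simp_all add: Gam_det mult_adj adj_mult)

lemma Gam_mcong_2: "g \<in> Gam \<Longrightarrow> mcong 2 g 1"
proof (induct rule: Gam_induct)
  case (mult a b)
  then show ?case using mcong_mult[of 2 a 1 b 1] by simp
next
  case (adj a)
  then show ?case using mcong_adj[of 2 a 1] by simp
qed (simp_all add: generator_defs mat22_zero_one zsqrt2_zero_one mcong_mat22_iff mcong_zsqrt2_iff)

section \<open>Strong approximation away from 6\<close>

lemma linear_congruence_nat_solution:
  fixes c q x :: int
  assumes "coprime c q" "q > 0"
  shows "\<exists>t::nat. q dvd c * int t - x"
proof -
  obtain u v where uv: "u * c + v * q = 1"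
    using bezout_int[of c q] assms(1) by (metis coprime_iff_gcd_eq_1)
  define t where "t = nat ((u * x) mod q)"
  have "int t = (u * x) mod q"
    using assms(2) by (simp add: t_def)
  also have "\<dots> = u * x - q * (u * x div q)"
    by (metis minus_div_mult_eq_mod mult.commute)
  finally have t: "int t = u * x - q * (u * x div q)" .
  have "c * int t - x = (u * c + v * q - 1) * x + q * (- v * x - c * (u * x div q))"
    unfolding t by (simp add: algebra_simps)
  then have "c * int t - x = q * (- v * x - c * (u * x div q))"
    by (simp add: uv)
  then show ?thesis
    by (metis dvd_triv_left)
qed

definition weyl :: mat22 where
  "weyl = M 0 (- 1) 1 0"

text \<open>\<open>unip x = 1 + x N\<close> with \<open>N\<^sup>2 = 0\<close>, the conjugate of \<open>upper x\<close> by \<open>lower \<surd>-2\<close>.\<close>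
definition unip :: "int \<Rightarrow> mat22" where
  "unip x = M (Z 1 (- x)) (Z x 0) (Z (2 * x) 0) (Z 1 x)"

lemma unip_power: "unip x ^ k = unip (int k * x)"
  by (induct k) (simp_all add: unip_def algebra_simps mat22_zero_one zsqrt2_zero_one)

lemma upper_lower_upper_weyl:
  "upper a * lower (- b) * upper a * weyl = M (a * (2 - a * b)) (a * b - 1) (1 - a * b) b"
  by (simp add: upper_def lower_def weyl_def algebra_simps)

lemma mcong_upper_lower_upper_weyl:
  fixes a b :: zsqrt2
  assumes "mcong q (a * b) 1"
  shows "mcong q (upper a * lower (- b) * upper a * weyl) (M a 0 0 b)"
proof -
  have "mcong q (a * (2 - a * b)) a"
    using mcong_mult[OF mcong_refl[of q a] mcong_diff[OF mcong_refl[of q 2] assms]] by simp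
  moreover have "mcong q (a * b - 1) 0" "mcong q (1 - a * b) 0"
    using mcong_diff[OF assms mcong_refl[of q 1]] mcong_diff[OF mcong_refl[of q 1] assms] by simp_all
  ultimately show ?thesis
    by (simp add: upper_lower_upper_weyl mcong_mat22_iff)
qed

definition approx :: "int \<Rightarrow> int \<Rightarrow> mat22 set" where
  "approx q Q = {A. \<exists>g\<in>Gam. mcong q g A \<and> mcong Q g 1}"

lemma approx_one: "1 \<in> approx q Q"
  unfolding approx_def using Gam_one by force

lemma approx_mult: "A \<in> approx q Q \<Longrightarrow> B \<in> approx q Q \<Longrightarrow> A * B \<in> approx q Q"
  unfolding approx_def using Gam_mult mcong_mult[of Q _ 1 _ 1] by (fastforce intro: mcong_mult)

lemma approx_adj: "A \<in> approx q Q \<Longrightarrow> adj A \<in> approx q Q"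
  unfolding approx_def using Gam_adj mcong_adj[of Q _ 1] by (fastforce intro: mcong_adj)

lemma approx_power: "A \<in> approx q Q \<Longrightarrow> A ^ k \<in> approx q Q"
  by (induct k) (auto intro: approx_mult approx_one)

lemma approx_mcong: "A \<in> approx q Q \<Longrightarrow> mcong q A B \<Longrightarrow> B \<in> approx q Q"
  unfolding approx_def using mcong_trans by blast

text \<open>A one-parameter family \<open>P\<close> that \<open>Gam\<close> meets along the arithmetic progression \<open>c \<int>\<close> is
  approximated everywhere: choose \<open>k \<equiv> c Q k' \<equiv> x (mod q)\<close>, so that \<open>h\<^bsup>Q k'\<^esup>\<close> is also trivial
  modulo \<open>Q\<close>.\<close>
lemma approx_one_parameter:
  fixes P :: "int \<Rightarrow> mat22"
  assumes "h \<in> Gam" "\<And>k. h ^ k = P (int k * c)"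
    and "\<And>y. Q dvd y \<Longrightarrow> mcong Q (P y) 1" "\<And>y y'. q dvd y - y' \<Longrightarrow> mcong q (P y) (P y')"
    and "coprime (c * Q) q" "q > 0" "Q > 0"
  shows "P x \<in> approx q Q"
proof -
  obtain t where t: "q dvd (c * Q) * int t - x"
    using linear_congruence_nat_solution assms(5,6) by blast
  define k where "k = nat Q * t"
  have hk: "h ^ k = P ((c * Q) * int t)"
    using assms(2)[of k] assms(7) by (simp add: k_def algebra_simps)
  have "h ^ k \<in> Gam"
    using Gam_power assms(1) by blast
  moreover have "mcong q (h ^ k) (P x)"
    unfolding hk using assms(4)[OF t] .
  moreover have "mcong Q (h ^ k) 1"
    unfolding hk by (rule assms(3)) simp
  ultimately show ?thesis
    unfolding approx_def by blast
qed

lemma mcong_upper_int: "n dvd y - y' \<Longrightarrow> mcong n (upper (Z y 0)) (upper (Z y' 0))"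
  and mcong_lower_int: "n dvd y - y' \<Longrightarrow> mcong n (lower (Z y 0)) (lower (Z y' 0))"
  by (simp_all add: upper_def lower_def mcong_mat22_iff mcong_zsqrt2_iff)

lemma mcong_unip:
  assumes "n dvd y - y'"
  shows "mcong n (unip y) (unip y')"
proof -
  have "n dvd 2 * y - 2 * y'" "n dvd y' - y"
    using dvd_mult[OF assms, of 2] dvd_minus_iff[of n "y - y'"] assms by (simp_all add: algebra_simps)
  then show ?thesis
    using assms by (simp add: unip_def mcong_mat22_iff mcong_zsqrt2_iff)
qed

lemma word_eq_upper_minus_8: "adj g1 * g5 * adj g1 * g5 = upper (Z (- 8) 0)"
  by (simp add: generator_defs upper_def zsqrt2_zero_one)

lemma word_eq_unip_minus_4: "adj g2 * g6 = unip (- 4)"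
  by (simp add: generator_defs unip_def)

lemma g3_eq_lower_minus_4: "g3 = lower (Z (- 4) 0)"
  by (simp add: generator_defs lower_def zsqrt2_zero_one)

context
  fixes q Q :: int
  assumes coprime_6: "coprime q 6" and coprime_Q: "coprime Q q" and q_pos: "q > 0" and Q_pos: "Q > 0"
begin

lemma coprime_2: "coprime 2 q" and coprime_3: "coprime 3 q"
  using coprime_6 coprime_commute coprime_mult_right_iff[of q 2 3] by auto

lemma coprime_pow2_Q: "coprime (2 ^ n * Q) q"
  using coprime_2 coprime_Q by simp

lemma approx_upper_int: "upper (Z x 0) \<in> approx q Q"
proof (rule approx_one_parameter[where h = "adj g1 * g5 * adj g1 * g5" and c = "- 8"
      and P = "\<lambda>y. upper (Z y 0)"])
  show "adj g1 * g5 * adj g1 * g5 \<in> Gam"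
    using Gam_generators by (auto intro!: Gam_mult Gam_adj)
  show "(adj g1 * g5 * adj g1 * g5) ^ k = upper (Z (int k * - 8) 0)" for k
    by (simp add: word_eq_upper_minus_8 upper_power of_nat_zsqrt2)
  show "Q dvd y \<Longrightarrow> mcong Q (upper (Z y 0)) 1" for y
    using mcong_upper_int[of Q y 0] by (simp add: upper_def mat22_zero_one zsqrt2_zero_one)
  show "coprime (- 8 * Q) q"
    using coprime_pow2_Q[of 3] by simp
qed (use q_pos Q_pos mcong_upper_int in auto)

lemma approx_lower_int: "lower (Z x 0) \<in> approx q Q"
proof (rule approx_one_parameter[where h = g3 and c = "- 4" and P = "\<lambda>y. lower (Z y 0)"])
  show "g3 ^ k = lower (Z (int k * - 4) 0)" for k
    by (simp add: g3_eq_lower_minus_4 lower_power of_nat_zsqrt2)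
  show "Q dvd y \<Longrightarrow> mcong Q (lower (Z y 0)) 1" for y
    using mcong_lower_int[of Q y 0] by (simp add: lower_def mat22_zero_one zsqrt2_zero_one)
  show "coprime (- 4 * Q) q"
    using coprime_pow2_Q[of 2] by simp
qed (use q_pos Q_pos mcong_lower_int Gam_generators in auto)

lemma approx_unip: "unip x \<in> approx q Q"
proof (rule approx_one_parameter[where h = "adj g2 * g6" and c = "- 4" and P = unip])
  show "adj g2 * g6 \<in> Gam"
    using Gam_generators by (auto intro!: Gam_mult Gam_adj)
  show "(adj g2 * g6) ^ k = unip (int k * - 4)" for k
    by (simp add: word_eq_unip_minus_4 unip_power)
  show "Q dvd y \<Longrightarrow> mcong Q (unip y) 1" for y
    using mcong_unip[of Q y 0] by (simp add: unip_def mat22_zero_one zsqrt2_zero_one)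
  show "coprime (- 4 * Q) q"
    using coprime_pow2_Q[of 2] by simp
qed (use q_pos Q_pos mcong_unip in auto)

lemma approx_weyl: "weyl \<in> approx q Q"
proof -
  have "weyl = upper (Z (- 1) 0) * lower (Z 1 0) * upper (Z (- 1) 0)"
    by (simp add: weyl_def upper_def lower_def zsqrt2_zero_one)
  then show ?thesis
    by (metis approx_mult approx_upper_int approx_lower_int)
qed

lemma approx_diag:
  assumes "mcong q (a * b) 1" "upper a \<in> approx q Q" "lower (- b) \<in> approx q Q"
  shows "M a 0 0 b \<in> approx q Q"
  using approx_mcong[OF _ mcong_upper_lower_upper_weyl[OF assms(1)]] assms(2,3)
  by (blast intro: approx_mult approx_weyl)

text \<open>The only delicate entry: conjugating by \<open>lower \<surd>-2\<close> turns \<open>upper\<close> into \<open>unip\<close>, and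
  \<open>diag(u, 2)\<close> times the conjugate of \<open>diag(2, u)\<close> is \<open>lower (3\<surd>-2)\<close> modulo \<open>q\<close>
  when \<open>2 u \<equiv> 1\<close>.\<close>
lemma approx_lower_3_sqrt: "lower (Z 0 3) \<in> approx q Q"
proof -
  obtain t where "q dvd 2 * int t - 1"
    using linear_congruence_nat_solution[OF coprime_2 q_pos] by blast
  then have u: "mcong q (Z 2 0 * Z (int t) 0) 1" "mcong q (Z (int t) 0 * Z 2 0) 1"
    by (simp_all add: mcong_zsqrt2_iff zsqrt2_zero_one mult.commute)
  define s where "s = lower (Z 0 1)"
  define T where "T = upper (Z 2 0) * lower (- Z (int t) 0) * upper (Z 2 0) * weyl"
  have "s * T * lower (Z 0 (- 1)) =
      unip 2 * lower (Z (- int t) 0) * unip 2 * (unip (- 1) * lower 1 * unip (- 1))"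
    by (simp add: s_def T_def unip_def upper_def lower_def weyl_def algebra_simps zsqrt2_zero_one)
  then have "s * T * lower (Z 0 (- 1)) \<in> approx q Q"
    by (simp add: approx_mult approx_unip approx_lower_int zsqrt2_zero_one)
  moreover have "M (Z (int t) 0) 0 0 (Z 2 0) \<in> approx q Q"
    using approx_diag[OF u(2)] approx_upper_int approx_lower_int by simp
  moreover have "mcong q (M (Z (int t) 0) 0 0 (Z 2 0) * (s * T * lower (Z 0 (- 1))))
    (M (Z (int t) 0) 0 0 (Z 2 0) * (s * M (Z 2 0) 0 0 (Z (int t) 0) * lower (Z 0 (- 1))))"
    unfolding T_def by (intro mcong_mult mcong_refl mcong_upper_lower_upper_weyl u(1))
  moreover have
    "mcong q (M (Z (int t) 0) 0 0 (Z 2 0) * (s * M (Z 2 0) 0 0 (Z (int t) 0) * lower (Z 0 (- 1))))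
      (lower (Z 0 3))"
    using \<open>q dvd 2 * int t - 1\<close> dvd_minus_iff[of q "2 * int t - 1"]
    by (simp add: s_def lower_def mcong_mat22_iff mcong_zsqrt2_iff zsqrt2_zero_one algebra_simps)
  ultimately show ?thesis
    by (meson approx_mult approx_mcong mcong_trans)
qed

lemma approx_lower_sqrt: "lower (Z 0 y) \<in> approx q Q"
proof -
  obtain t where t: "q dvd 3 * int t - y"
    using linear_congruence_nat_solution[OF coprime_3 q_pos] by blast
  have "lower (Z 0 3) ^ t = lower (Z 0 (3 * int t))"
    by (simp add: lower_power of_nat_zsqrt2 mult.commute)
  then have "lower (Z 0 (3 * int t)) \<in> approx q Q"
    by (metis approx_power approx_lower_3_sqrt)
  moreover have "mcong q (lower (Z 0 (3 * int t))) (lower (Z 0 y))"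
    using t by (simp add: lower_def mcong_mat22_iff mcong_zsqrt2_iff)
  ultimately show ?thesis
    using approx_mcong by blast
qed

lemma approx_lower: "lower x \<in> approx q Q"
proof -
  obtain a b where "x = Z a b" by (cases x)
  then have "lower x = lower (Z a 0) * lower (Z 0 b)"
    by (simp add: lower_add)
  then show ?thesis
    by (simp add: approx_mult approx_lower_int approx_lower_sqrt)
qed

lemma approx_upper: "upper x \<in> approx q Q"
proof -
  have "upper x = weyl * lower (- x) * adj weyl"
    by (cases x) (simp add: weyl_def upper_def lower_def zsqrt2_zero_one)
  then show ?thesis
    by (simp add: approx_mult approx_adj approx_weyl approx_lower)
qed

lemma approx_upper_triangular:
  assumes "mcong q (a * d) 1"
  shows "M a b 0 d \<in> approx q Q"
proof -
  have "M a 0 0 d * upper (d * b) \<in> approx q Q"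
    using approx_diag[OF assms] by (simp add: approx_mult approx_upper approx_lower)
  moreover have "mcong q (M a 0 0 d * upper (d * b)) (M a b 0 d)"
    using mcong_mult[OF assms mcong_refl[of q b]]
    by (simp add: upper_def mcong_mat22_iff mult.assoc)
  ultimately show ?thesis
    by (rule approx_mcong)
qed

text \<open>Euclid's algorithm in the lower left entry, whose norm strictly decreases.\<close>
lemma approx_of_det_mcong_aux:
  "mcong q (det (M a b c d)) 1 \<Longrightarrow> M a b c d \<in> approx q Q"
proof (induct "nat (znorm c)" arbitrary: a b c d rule: less_induct)
  case less
  show ?case
  proof (cases "c = 0")
    case True
    then show ?thesis
      using less.prems approx_upper_triangular by simp
  next
    case False
    then obtain t where t: "znorm (a - t * c) < znorm c"
      using zsqrt2_euclidean by blast
    have reduce: "weyl * upper (- t) * M a b c d = M (- c) (- d) (a - t * c) (b - t * d)"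
      by (simp add: weyl_def upper_def algebra_simps)
    have "det (weyl * upper (- t) * M a b c d) = det (M a b c d)"
      by (simp add: det_mult weyl_def upper_def algebra_simps)
    moreover have "nat (znorm (a - t * c)) < nat (znorm c)"
      using t znorm_nonneg[of "a - t * c"] by linarith
    ultimately have "weyl * upper (- t) * M a b c d \<in> approx q Q"
      using less reduce by simp
    moreover have "upper t * adj weyl * (weyl * upper (- t) * M a b c d) = M a b c d"
      by (simp add: weyl_def upper_def algebra_simps)
    ultimately show ?thesis
      by (metis approx_mult approx_adj approx_upper approx_weyl)
  qed
qed

theorem strong_approximation:
  "mcong q (det A) 1 \<Longrightarrow> \<exists>g\<in>Gam. mcong q g A \<and> mcong Q g 1"
  using approx_of_det_mcong_aux[of "_" "_" "_" "_"] unfolding approx_def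
  by (cases A) auto

end

section \<open>Lifting at the primes 2 and 3\<close>

lemma mcong_one_power: "mcong n g 1 \<Longrightarrow> mcong n (g ^ k) 1"
  using mcong_power[of n g 1 k] by simp

lemma mcong_power_mod:
  assumes "mcong n (g ^ N) 1" "K mod N = 1"
  shows "mcong n (g ^ K) g"
proof -
  have "mcong n ((g ^ N) ^ (K div N) * g) (1 * g)"
    using mcong_mult[OF mcong_one_power[OF assms(1)] mcong_refl] .
  moreover have "K = N * (K div N) + 1"
    using assms(2) div_mult_mod_eq[of K N] by (simp add: mult.commute)
  then have "g ^ K = (g ^ N) ^ (K div N) * g"
    by (metis power_add power_mult power_one_right)
  ultimately show ?thesis
    by simp
qed

lemma mcong_square_one:
  fixes g :: mat22
  assumes "mcong n g 1" "2 dvd n"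
  shows "mcong (2 * n) (g\<^sup>2) 1"
proof -
  obtain X where X: "g = 1 + of_int n * X" using assms(1) by (blast elim: mcongE)
  obtain k where k: "n = 2 * k" using assms(2) by blast
  have "g\<^sup>2 = 1 + of_int (2 * n) * (X + of_int k * (X * X))"
    unfolding X k by (cases X) (simp add: power2_eq_square of_int_mat22 mat22_zero_one algebra_simps)
  then show ?thesis by (rule mcongI)
qed

lemma mcong_cube_one:
  fixes g :: mat22
  assumes "mcong n g 1" "3 dvd n"
  shows "mcong (3 * n) (g ^ 3) 1"
proof -
  obtain X where X: "g = 1 + of_int n * X" using assms(1) by (blast elim: mcongE)
  obtain k where k: "n = 3 * k" using assms(2) by blast
  have "g ^ 3 = 1 + of_int (3 * n) * (X + of_int n * (X * X) + of_int (n * k) * (X * X * X))"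
    unfolding X k by (cases X) (simp add: power3_eq_cube of_int_mat22 mat22_zero_one algebra_simps)
  then show ?thesis by (rule mcongI)
qed

lemma mcong_power_two_power: "mcong 2 (g :: mat22) 1 \<Longrightarrow> mcong (2 ^ (k + 1)) (g ^ (2 ^ k)) 1"
proof (induct k)
  case (Suc k)
  then have "mcong (2 * 2 ^ (k + 1)) ((g ^ (2 ^ k))\<^sup>2) 1"
    by (intro mcong_square_one) simp_all
  then show ?case
    by (simp add: power_mult[symmetric] mult.commute)
qed simp

lemma mcong_power_three_power: "mcong 3 (g :: mat22) 1 \<Longrightarrow> mcong (3 ^ (k + 1)) (g ^ (3 ^ k)) 1"
proof (induct k)
  case (Suc k)
  then have "mcong (3 * 3 ^ (k + 1)) ((g ^ (3 ^ k)) ^ 3) 1"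
    by (intro mcong_cube_one) simp_all
  then show ?case
    by (simp add: power_mult[symmetric] mult.commute)
qed simp

lemma Gam_power_two_power: "g \<in> Gam \<Longrightarrow> mcong (2 ^ (k + 1)) (g ^ (2 ^ k)) 1"
  using Gam_mcong_2 mcong_power_two_power by blast

lemma dvd_scaled_sum_iff:
  fixes p c t d :: int
  assumes "c \<noteq> 0" "p * c dvd c * c"
  shows "p * c dvd c * t + c * c * d \<longleftrightarrow> p dvd t"
proof -
  have "p * c dvd c * t + c * c * d \<longleftrightarrow> p * c dvd c * t"
    using assms(2) by (simp add: dvd_add_left_iff)
  also have "\<dots> \<longleftrightarrow> p dvd t"
    using assms(1) by (simp add: mult.commute)
  finally show ?thesis .
qed

lemma det_one_plus_mcong_iff:
  assumes "c \<noteq> 0" "p * c dvd c * c"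
  shows "mcong (p * c) (det (1 + of_int c * X)) 1 \<longleftrightarrow> mcong p (trace X) 0"
proof -
  obtain t1 t2 where t: "trace X = Z t1 t2" by (cases "trace X")
  obtain d1 d2 where d: "det X = Z d1 d2" by (cases "det X")
  have "det (1 + of_int c * X) = Z (1 + (c * t1 + c * c * d1)) (c * t2 + c * c * d2)"
    unfolding det_one_plus_of_int t d by (simp add: of_int_zsqrt2 zsqrt2_zero_one)
  then show ?thesis
    using dvd_scaled_sum_iff[OF assms]
    by (simp add: t mcong_zsqrt2_iff zsqrt2_zero_one)
qed

definition realized :: "int \<Rightarrow> int \<Rightarrow> int \<Rightarrow> mat22 \<Rightarrow> bool" where
  "realized n c Q P \<longleftrightarrow> (\<exists>g\<in>Gam. mcong n g (1 + of_int c * P) \<and> mcong Q g 1)"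

lemma one_plus_of_int_mult:
  "(1 + of_int c * (P :: mat22)) * (1 + of_int c * P') = 1 + of_int c * (P + P') + of_int (c * c) * (P * P')"
  by (cases P; cases P') (simp add: of_int_mat22 mat22_zero_one algebra_simps)

lemma realized_add:
  assumes "n dvd c * c" "realized n c Q P" "realized n c Q P'"
  shows "realized n c Q (P + P')"
proof -
  obtain g g' where g: "g \<in> Gam" "mcong n g (1 + of_int c * P)" "mcong Q g 1"
    and g': "g' \<in> Gam" "mcong n g' (1 + of_int c * P')" "mcong Q g' 1"
    using assms(2,3) unfolding realized_def by blast
  have "mcong n (g * g') (1 + of_int c * (P + P') + of_int (c * c) * (P * P'))"
    using mcong_mult[OF g(2) g'(2)] by (simp only: one_plus_of_int_mult)
  then have "mcong n (g * g') (1 + of_int c * (P + P'))"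
    using mcong_add_multiple[OF assms(1)] mcong_trans by blast
  moreover have "mcong Q (g * g') 1"
    using mcong_mult[OF g(3) g'(3)] by simp
  ultimately show ?thesis
    unfolding realized_def using Gam_mult[OF g(1) g'(1)] by blast
qed

lemma realized_of_nat_mult:
  assumes "n dvd c * c" "realized n c Q P"
  shows "realized n c Q (of_nat k * P)"
proof (induct k)
  case 0
  show ?case
    unfolding realized_def using Gam_one by force
next
  case (Suc k)
  have "of_nat (Suc k) * P = of_nat k * P + P"
    by (simp add: algebra_simps)
  then show ?case
    using realized_add[OF assms(1) Suc assms(2)] by simp
qed

definition sl2_basis :: "mat22 set" where
  "sl2_basis = {M 1 0 0 (- 1), M (Z 0 1) 0 0 (- Z 0 1), M 0 1 0 0, M 0 (Z 0 1) 0 0,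
     M 0 0 1 0, M 0 0 (Z 0 1) 0}"

lemma mcong_trace_zero_span:
  assumes "p > 0" "mcong p (trace X) 0"
  obtains k1 k2 k3 k4 k5 k6 :: nat where "mcong p X
    (of_nat k1 * M 1 0 0 (- 1) + of_nat k2 * M (Z 0 1) 0 0 (- Z 0 1) + of_nat k3 * M 0 1 0 0
     + of_nat k4 * M 0 (Z 0 1) 0 0 + of_nat k5 * M 0 0 1 0 + of_nat k6 * M 0 0 (Z 0 1) 0)"
proof -
  obtain x1 x2 x3 x4 x5 x6 x7 x8 where X: "X = M (Z x1 x2) (Z x3 x4) (Z x5 x6) (Z x7 x8)"
    by (metis mat22.exhaust zsqrt2.exhaust)
  have "p dvd x1 + x7" "p dvd x2 + x8"
    using assms(2) by (simp_all add: X mcong_zsqrt2_iff zsqrt2_zero_one)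
  then have "mcong p X (M (Z (x1 mod p) (x2 mod p)) (Z (x3 mod p) (x4 mod p))
      (Z (x5 mod p) (x6 mod p)) (Z (- (x1 mod p)) (- (x2 mod p))))"
    unfolding X by (simp add: mcong_mat22_iff mcong_zsqrt2_iff dvd_eq_mod_eq_0 mod_add_right_eq mod_diff_right_eq add.commute)
  moreover have "M (Z (x1 mod p) (x2 mod p)) (Z (x3 mod p) (x4 mod p))
      (Z (x5 mod p) (x6 mod p)) (Z (- (x1 mod p)) (- (x2 mod p))) =
    of_nat (nat (x1 mod p)) * M 1 0 0 (- 1) + of_nat (nat (x2 mod p)) * M (Z 0 1) 0 0 (- Z 0 1)
     + of_nat (nat (x3 mod p)) * M 0 1 0 0 + of_nat (nat (x4 mod p)) * M 0 (Z 0 1) 0 0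
     + of_nat (nat (x5 mod p)) * M 0 0 1 0 + of_nat (nat (x6 mod p)) * M 0 0 (Z 0 1) 0"
    using assms(1) by (simp add: of_nat_mat22 of_nat_zsqrt2 mat22_zero_one zsqrt2_zero_one)
  ultimately show ?thesis
    using that by metis
qed

lemma lift_base:
  assumes "p > 0" "c \<noteq> 0" "p * c dvd c * c"
    and basis: "\<And>P. P \<in> sl2_basis \<Longrightarrow> realized (p * c) c Q P"
    and A: "mcong c A 1" "mcong (p * c) (det A) 1"
  shows "\<exists>g\<in>Gam. mcong (p * c) g A \<and> mcong Q g 1"
proof -
  obtain X where X: "A = 1 + of_int c * X"
    using A(1) by (blast elim: mcongE)
  have "mcong p (trace X) 0"
    using A(2) det_one_plus_mcong_iff[OF assms(2,3)] by (simp add: X)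
  then obtain k1 k2 k3 k4 k5 k6 where B: "mcong p X (of_nat k1 * M 1 0 0 (- 1)
      + of_nat k2 * M (Z 0 1) 0 0 (- Z 0 1) + of_nat k3 * M 0 1 0 0 + of_nat k4 * M 0 (Z 0 1) 0 0
      + of_nat k5 * M 0 0 1 0 + of_nat k6 * M 0 0 (Z 0 1) 0)" (is "mcong p X ?B")
    by (rule mcong_trace_zero_span[OF assms(1)])
  have "realized (p * c) c Q ?B"
    by (intro realized_add[OF assms(3)]; rule realized_of_nat_mult[OF assms(3) basis])
      (simp_all add: sl2_basis_def)
  then obtain g where g: "g \<in> Gam" "mcong (p * c) g (1 + of_int c * ?B)" "mcong Q g 1"
    unfolding realized_def by blast
  have "mcong (p * c) A (1 + of_int c * ?B)"
    using mcong_one_plus_scaled[OF B, of c] unfolding X mult.commute[of c p] .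
  then show ?thesis
    using g(1,3) mcong_trans[OF g(2) mcong_sym] by blast
qed

text \<open>Raising one level: if \<open>g\<^sub>0 \<equiv> A\<close> modulo \<open>p c\<close>, then \<open>A g\<^sub>0\<^sup>-\<^sup>1 = 1 + p c X\<close> with \<open>trace X \<equiv> 0\<close>;
  an element \<open>g\<^sub>1 \<equiv> 1 + c X\<close> modulo \<open>p c\<close> has \<open>g\<^sub>1\<^sup>p \<equiv> 1 + p c X\<close> modulo \<open>p\<^sup>2 c\<close>.\<close>
lemma lift_step:
  fixes p c L Q :: int
  assumes "p > 0" "c \<noteq> 0" "p dvd c" "L dvd c"
    and power: "\<And>X Y :: mat22. mcong (p * (p * c)) ((1 + of_int c * X + of_int (p * c) * Y) ^ nat p)
      (1 + of_int (p * c) * X)"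
    and IH: "\<And>A. mcong L A 1 \<Longrightarrow> mcong (p * c) (det A) 1 \<Longrightarrow> \<exists>g\<in>Gam. mcong (p * c) g A \<and> mcong Q g 1"
    and A: "mcong L A 1" "mcong (p * (p * c)) (det A) 1"
  shows "\<exists>g\<in>Gam. mcong (p * (p * c)) g A \<and> mcong Q g 1"
proof -
  have pc: "p * c \<noteq> 0" "p * (p * c) dvd (p * c) * (p * c)" "p * c dvd c * c"
    using assms(1-3) by auto
  have "mcong (p * c) (det A) 1"
    using A(2) mcong_dvd[of "p * c" "p * (p * c)"] by simp
  then obtain g0 where g0: "g0 \<in> Gam" "mcong (p * c) g0 A" "mcong Q g0 1"
    using IH A(1) by blast
  define B where "B = A * adj g0"
  have "mcong (p * c) B (g0 * adj g0)"
    unfolding B_def using g0(2) mcong_sym mcong_mult mcong_refl by blast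
  then obtain X where X: "B = 1 + of_int (p * c) * X"
    using Gam_mult_adj[OF g0(1)] by (auto elim: mcongE)
  have "det B = det A"
    unfolding B_def det_mult det_adj Gam_det[OF g0(1)] by simp
  then have "mcong (p * (p * c)) (det B) 1"
    using A(2) by simp
  then have "mcong p (trace X) 0"
    unfolding X det_one_plus_mcong_iff[OF pc(1,2)] .
  then have "mcong (p * c) (det (1 + of_int c * X)) 1"
    using det_one_plus_mcong_iff[OF assms(2) pc(3)] by simp
  moreover have "mcong L (1 + of_int c * X) 1"
    using mcong_add_multiple[OF assms(4), of 1 X] by simp
  ultimately obtain g1 where g1: "g1 \<in> Gam" "mcong (p * c) g1 (1 + of_int c * X)" "mcong Q g1 1"
    using IH by blast
  then obtain Y where "g1 = 1 + of_int c * X + of_int (p * c) * Y"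
    by (blast elim: mcongE)
  then have "mcong (p * (p * c)) (g1 ^ nat p * g0) (B * g0)"
    using power[of X Y] X by (intro mcong_mult) simp_all
  moreover have "B * g0 = A"
    unfolding B_def using Gam_adj_mult[OF g0(1)] by (simp add: mult.assoc)
  moreover have "mcong Q (g1 ^ nat p * g0) 1"
    using mcong_mult[OF mcong_one_power[OF g1(3)] g0(3)] by simp
  moreover have "g1 ^ nat p * g0 \<in> Gam"
    using Gam_mult Gam_power g1(1) g0(1) by blast
  ultimately show ?thesis
    by auto
qed

lemma lift_levels:
  fixes p c L Q :: int
  assumes "p > 0" "c \<noteq> 0" "p dvd c" "L dvd c"
    and power: "\<And>c' (X :: mat22) Y. c dvd c' \<Longrightarrow> mcong (p * (p * c')) ((1 + of_int c' * X + of_int (p * c') * Y) ^ nat p)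
      (1 + of_int (p * c') * X)"
    and base: "\<And>A. mcong L A 1 \<Longrightarrow> mcong (p * c) (det A) 1 \<Longrightarrow> \<exists>g\<in>Gam. mcong (p * c) g A \<and> mcong Q g 1"
  shows "mcong L A 1 \<Longrightarrow> mcong (p ^ (k + 1) * c) (det A) 1 \<Longrightarrow>
    \<exists>g\<in>Gam. mcong (p ^ (k + 1) * c) g A \<and> mcong Q g 1"
proof (induct k arbitrary: A)
  case 0
  then show ?case using base by simp
next
  case (Suc k)
  have "\<exists>g\<in>Gam. mcong (p * (p * (p ^ k * c))) g A \<and> mcong Q g 1"
  proof (rule lift_step[where L = L and c = "p ^ k * c"])
    show "mcong (p * (p * (p ^ k * c))) ((1 + of_int (p ^ k * c) * X + of_int (p * (p ^ k * c)) * Y) ^ nat p)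
      (1 + of_int (p * (p ^ k * c)) * X)" for X Y :: mat22
      by (rule power) simp
    show "mcong (p * (p * (p ^ k * c))) (det A) 1"
      using Suc.prems(2) by (simp add: algebra_simps)
  qed (use assms Suc in \<open>auto simp: algebra_simps\<close>)
  then show ?case
    by (simp add: algebra_simps)
qed

lemma mcong_square_lift:
  fixes X Y :: mat22
  assumes "4 dvd c"
  shows "mcong (2 * (2 * c)) ((1 + of_int c * X + of_int (2 * c) * Y) ^ nat 2) (1 + of_int (2 * c) * X)"
proof -
  obtain e where c: "c = 4 * e" using assms by blast
  have "(1 + of_int c * X + of_int (2 * c) * Y) ^ nat 2 =
      1 + of_int (2 * c) * X + of_int (2 * (2 * c)) * (Y + of_int e * ((X + Y + Y) * (X + Y + Y)))"
    unfolding c by (cases X; cases Y) (simp add: power2_eq_square of_int_mat22 mat22_zero_one algebra_simps)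
  then show ?thesis by (rule mcongI)
qed

lemma mcong_cube_lift:
  fixes X Y :: mat22
  assumes "3 dvd c"
  shows "mcong (3 * (3 * c)) ((1 + of_int c * X + of_int (3 * c) * Y) ^ nat 3) (1 + of_int (3 * c) * X)"
proof -
  obtain e where c: "c = 3 * e" using assms by blast
  define Z where "Z = X + Y + Y + Y"
  have "(1 + of_int c * X + of_int (3 * c) * Y) ^ nat 3 =
      1 + of_int (3 * c) * X + of_int (3 * (3 * c)) * (Y + of_int e * (Z * Z) + of_int (e * e) * (Z * Z * Z))"
    unfolding c Z_def by (cases X; cases Y) (simp add: power3_eq_cube of_int_mat22 mat22_zero_one algebra_simps)
  then show ?thesis by (rule mcongI)
qed

lemma realized_16_of_witness:
  assumes "h \<in> Gam" "mcong 16 h (1 + of_int 8 * P)" "mcong 3 h 1"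
  shows "realized 16 8 (3 ^ b) P"
proof -
  have "mcong 8 h (1 + of_int 8 * P)"
    using mcong_dvd[OF _ assms(2), of 8] by simp
  then have "mcong 8 h 1"
    using mcong_add_multiple[of 8 8 1 P] mcong_trans by fastforce
  then have "mcong 16 (h\<^sup>2) 1"
    using mcong_square_one by fastforce
  moreover have "(3::nat) ^ b mod 2 = 1"
    by (induct b) (simp_all add: mod_mult_right_eq[symmetric])
  ultimately have "mcong 16 (h ^ 3 ^ b) h"
    by (rule mcong_power_mod)
  then have "mcong 16 (h ^ 3 ^ b) (1 + of_int 8 * P)"
    using assms(2) by (rule mcong_trans)
  moreover have "mcong (3 ^ b) (h ^ 3 ^ b) 1"
    using mcong_power_three_power[OF assms(3), of b] mcong_dvd[of "3 ^ b" "3 ^ (b + 1)"] by simp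
  ultimately show ?thesis
    unfolding realized_def using Gam_power[OF assms(1)] by blast
qed

lemma realized_9_of_witness:
  assumes "h \<in> Gam" "mcong 9 h (1 + of_int 3 * P)"
  shows "realized 9 3 (2 ^ a) P"
proof -
  have "mcong 3 h (1 + of_int 3 * P)"
    using mcong_dvd[OF _ assms(2), of 3] by simp
  then have "mcong 3 h 1"
    using mcong_add_multiple[of 3 3 1 P] mcong_trans by fastforce
  then have "mcong 9 (h ^ 3) 1"
    using mcong_cube_one by fastforce
  moreover have "(4::nat) ^ a mod 3 = 1"
    by (induct a) (simp_all add: mod_mult_right_eq[symmetric])
  ultimately have "mcong 9 (h ^ 4 ^ a) h"
    by (rule mcong_power_mod)
  then have "mcong 9 (h ^ 4 ^ a) (1 + of_int 3 * P)"
    using assms(2) by (rule mcong_trans)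
  moreover have "mcong (2 ^ a) (h ^ 2 ^ a) 1"
    using mcong_dvd[OF _ Gam_power_two_power[OF assms(1), of a], of "2 ^ a"] by simp
  then have "mcong (2 ^ a) ((h ^ 2 ^ a) ^ 2 ^ a) 1"
    by (rule mcong_one_power)
  then have "mcong (2 ^ a) (h ^ 4 ^ a) 1"
    by (simp add: power_mult[symmetric] power_mult_distrib[symmetric])
  ultimately show ?thesis
    unfolding realized_def using Gam_power[OF assms(1)] by blast
qed

lemma Gam_upper_24: "upper (Z 24 0) \<in> Gam"
proof -
  have "adj (adj g1 * g5 * adj g1 * g5) ^ 3 \<in> Gam"
    using Gam_generators by (intro Gam_power Gam_adj Gam_mult)
  moreover have "adj (adj g1 * g5 * adj g1 * g5) ^ 3 = upper (Z 24 0)"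
  proof -
    have "adj (upper (Z (- 8) 0)) = upper (Z 8 0)"
      by (simp add: upper_def zsqrt2_zero_one)
    then show ?thesis
      by (simp add: word_eq_upper_minus_8 upper_power of_nat_zsqrt2)
  qed
  ultimately show ?thesis by simp
qed

lemma Gam_lower_24: "lower (Z 24 0) \<in> Gam"
proof -
  have "adj g3 ^ 6 \<in> Gam"
    using Gam_generators by (intro Gam_power Gam_adj)
  moreover have "adj g3 ^ 6 = lower (Z 24 0)"
  proof -
    have "adj (lower (Z (- 4) 0)) = lower (Z 4 0)"
      by (simp add: lower_def zsqrt2_zero_one)
    then show ?thesis
      by (simp add: g3_eq_lower_minus_4 lower_power of_nat_zsqrt2)
  qed
  ultimately show ?thesis by simp
qed

lemmas mcong_numeral_simps = mcong_mat22_iff mcong_zsqrt2_iff of_int_mat22 of_int_zsqrt2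
  mat22_zero_one zsqrt2_zero_one generator_defs

lemma realized_16_basis:
  assumes "P \<in> sl2_basis"
  shows "realized 16 8 (3 ^ b) P"
proof -
  have "realized 16 8 (3 ^ b) (M 1 0 0 (- 1))"
    by (rule realized_16_of_witness[where h = "g1 * g3 * g5 * adj g1 * adj g3 * adj g5"])
      (intro Gam_mult Gam_adj Gam_generators, simp_all add: mcong_numeral_simps)
  moreover have "realized 16 8 (3 ^ b) (M (Z 0 1) 0 0 (- Z 0 1))"
    by (rule realized_16_of_witness[where h = "g4 * g4 * g4 * g4"])
      (intro Gam_mult Gam_adj Gam_generators, simp_all add: mcong_numeral_simps)
  moreover have "realized 16 8 (3 ^ b) (M 0 1 0 0)"
    by (rule realized_16_of_witness[OF Gam_upper_24]) (simp_all add: upper_def mcong_numeral_simps)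
  moreover have "realized 16 8 (3 ^ b) (M 0 (Z 0 1) 0 0)"
    by (rule realized_16_of_witness[where
          h = "g1 * g1 * adj g3 * adj g4 * g7 * adj g1 * adj g4 * adj g1 * adj g4"])
      (intro Gam_mult Gam_adj Gam_generators, simp_all add: mcong_numeral_simps)
  moreover have "realized 16 8 (3 ^ b) (M 0 0 1 0)"
    by (rule realized_16_of_witness[OF Gam_lower_24]) (simp_all add: lower_def mcong_numeral_simps)
  moreover have "realized 16 8 (3 ^ b) (M 0 0 (Z 0 1) 0)"
    by (rule realized_16_of_witness[where h = "g1 * g1 * g1 * adj g3 * adj g7 * g5 * adj g1 * adj g4 * g5"])
      (intro Gam_mult Gam_adj Gam_generators, simp_all add: mcong_numeral_simps)
  ultimately show ?thesis
    using assms unfolding sl2_basis_def by blast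
qed

lemma realized_9_basis:
  assumes "P \<in> sl2_basis"
  shows "realized 9 3 (2 ^ a) P"
proof -
  have "realized 9 3 (2 ^ a) (M 1 0 0 (- 1))"
    by (rule realized_9_of_witness[where h = "g1 * g5 * adj g3 * g5"])
      (intro Gam_mult Gam_adj Gam_generators, simp_all add: mcong_numeral_simps)
  moreover have "realized 9 3 (2 ^ a) (M (Z 0 1) 0 0 (- Z 0 1))"
    by (rule realized_9_of_witness[where h = "g1 * g4 * adj g6 * adj g3 * adj g4 * g6"])
      (intro Gam_mult Gam_adj Gam_generators, simp_all add: mcong_numeral_simps)
  moreover have "realized 9 3 (2 ^ a) (M 0 1 0 0)"
    by (rule realized_9_of_witness[where h = "g1 * g3 * g3 * g3 * adj g1"])
      (intro Gam_mult Gam_adj Gam_generators, simp_all add: mcong_numeral_simps)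
  moreover have "realized 9 3 (2 ^ a) (M 0 (Z 0 1) 0 0)"
    by (rule realized_9_of_witness[where h = "g1 * g2 * g1 * g6 * adj g4 * adj g6"])
      (intro Gam_mult Gam_adj Gam_generators, simp_all add: mcong_numeral_simps)
  moreover have "realized 9 3 (2 ^ a) (M 0 0 1 0)"
    by (rule realized_9_of_witness[where h = "adj g3 * adj g3 * adj g3"])
      (intro Gam_mult Gam_adj Gam_generators, simp_all add: mcong_numeral_simps)
  moreover have "realized 9 3 (2 ^ a) (M 0 0 (Z 0 1) 0)"
    by (rule realized_9_of_witness[where h = "g1 * g2 * g5 * adj g4 * adj g2 * adj g7"])
      (intro Gam_mult Gam_adj Gam_generators, simp_all add: mcong_numeral_simps)
  ultimately show ?thesis
    using assms unfolding sl2_basis_def by blast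
qed

lemma lift_2_adic:
  assumes "4 \<le> l" "mcong 8 A 1" "mcong (2 ^ l) (det A) 1"
  shows "\<exists>g\<in>Gam. mcong (2 ^ l) g A \<and> mcong (3 ^ b) g 1"
proof -
  obtain k where "l = k + 4"
    using assms(1) by (metis add.commute le_Suc_ex)
  then have l: "(2::int) ^ l = 2 ^ (k + 1) * 8"
    by (simp add: power_add)
  show ?thesis
    unfolding l
  proof (rule lift_levels[where L = 8])
    show "mcong (2 * (2 * c')) ((1 + of_int c' * X + of_int (2 * c') * Y) ^ nat 2)
      (1 + of_int (2 * c') * X)" if "8 dvd c'" for c' and X Y :: mat22
      using that by (intro mcong_square_lift) (simp add: dvd_trans[of 4 8])
    show "\<exists>g\<in>Gam. mcong (2 * 8) g A \<and> mcong (3 ^ b) g 1"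
      if "mcong 8 A 1" "mcong (2 * 8) (det A) 1" for A
      using lift_base[of 2 8 "3 ^ b" A] realized_16_basis that by simp
  qed (use assms(2,3) l in simp_all)
qed

lemma lift_3_adic:
  assumes "2 \<le> l" "mcong 3 A 1" "mcong (3 ^ l) (det A) 1"
  shows "\<exists>g\<in>Gam. mcong (3 ^ l) g A \<and> mcong (2 ^ a) g 1"
proof -
  obtain k where "l = k + 2"
    using assms(1) by (metis add.commute le_Suc_ex)
  then have l: "(3::int) ^ l = 3 ^ (k + 1) * 3"
    by (simp add: power_add)
  show ?thesis
    unfolding l
  proof (rule lift_levels[where L = 3])
    show "mcong (3 * (3 * c')) ((1 + of_int c' * X + of_int (3 * c') * Y) ^ nat 3)
      (1 + of_int (3 * c') * X)" if "3 dvd c'" for c' and X Y :: mat22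
      using that by (rule mcong_cube_lift)
    show "\<exists>g\<in>Gam. mcong (3 * 3) g A \<and> mcong (2 ^ a) g 1"
      if "mcong 3 A 1" "mcong (3 * 3) (det A) 1" for A
      using lift_base[of 3 3 "2 ^ a" A] realized_9_basis that by simp
  qed (use assms(2,3) l in simp_all)
qed

text \<open>Replacing \<open>v\<close> by \<open>v\<^bsup>9\<^sup>b\<^esup>\<close> keeps it modulo 8 (as \<open>v\<^sup>4 \<equiv> 1\<close>) and kills it modulo \<open>3\<^sup>b\<close>;
  the lift then corrects the remaining error, which is trivial modulo 8.\<close>
lemma approx_2_adic_of_witness:
  assumes x: "x \<in> Gam" and v: "v \<in> Gam" "mcong 8 v x" "mcong 3 v 1"
  shows "\<exists>h\<in>Gam. mcong (2 ^ a) h x \<and> mcong (3 ^ b) h 1"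
proof -
  define v' where "v' = v ^ 9 ^ b"
  have "v' \<in> Gam"
    unfolding v'_def using Gam_power v(1) by blast
  have "(9::nat) ^ b mod 4 = 1"
    by (induct b) (simp_all add: mod_mult_right_eq[symmetric])
  then have "mcong 8 v' v"
    unfolding v'_def using mcong_power_mod Gam_power_two_power[OF v(1), of 2] by simp
  then have "mcong 8 (x * adj v') 1"
    using mcong_mult[OF mcong_refl mcong_adj[OF mcong_trans[OF _ v(2)]]] Gam_mult_adj[OF x] by metis
  moreover have "det (x * adj v') = 1"
    using Gam_det x \<open>v' \<in> Gam\<close> by (simp add: det_mult det_adj)
  ultimately obtain h0 where h0: "h0 \<in> Gam" "mcong (2 ^ (a + 4)) h0 (x * adj v')" "mcong (3 ^ b) h0 1"
    using lift_2_adic[of "a + 4" "x * adj v'" b] by auto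
  have "mcong (3 ^ (2 * b + 1)) v' 1"
    unfolding v'_def using mcong_power_three_power[OF v(3), of "2 * b"] by (simp add: power_mult)
  then have "mcong (3 ^ b) v' 1"
    by (rule mcong_dvd[rotated]) (simp add: le_imp_power_dvd)
  have "mcong (2 ^ (a + 4)) (h0 * v') x"
    using mcong_mult[OF h0(2) mcong_refl[of _ v']] Gam_adj_mult[OF \<open>v' \<in> Gam\<close>] by (simp add: mult.assoc)
  then have "mcong (2 ^ a) (h0 * v') x"
    by (rule mcong_dvd[rotated]) (simp add: le_imp_power_dvd)
  moreover have "mcong (3 ^ b) (h0 * v') 1"
    using mcong_mult[OF h0(3) \<open>mcong (3 ^ b) v' 1\<close>] by simp
  ultimately show ?thesis
    using Gam_mult[OF h0(1) \<open>v' \<in> Gam\<close>] by blast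
qed

lemma approx_2_adic:
  assumes "g \<in> Gam"
  shows "\<exists>h\<in>Gam. mcong (2 ^ a) h g \<and> mcong (3 ^ b) h 1"
  using assms
proof (induct rule: Gam_induct)
  case one
  show ?case using Gam_one by force
next
  case g1
  show ?case
    by (rule approx_2_adic_of_witness[where v = "g1 * g1 * g1 * g5 * g5"])
      (intro Gam_generators, intro Gam_mult Gam_generators, simp_all add: mcong_numeral_simps)
next
  case g2
  show ?case
    by (rule approx_2_adic_of_witness[where v = "adj g1 * adj g1 * g4 * adj g2 * g4"])
      (intro Gam_generators, intro Gam_mult Gam_adj Gam_generators, simp_all add: mcong_numeral_simps)
next
  case g3
  show ?case
    by (rule approx_2_adic_of_witness[where v = "g3 * g3 * g3"])
      (intro Gam_generators, intro Gam_mult Gam_generators, simp_all add: mcong_numeral_simps)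
next
  case g4
  show ?case
    by (rule approx_2_adic_of_witness[where v = "g3 * g4 * adj g7 * adj g4"])
      (intro Gam_generators, intro Gam_mult Gam_adj Gam_generators, simp_all add: mcong_numeral_simps)
next
  case g5
  show ?case
    by (rule approx_2_adic_of_witness[where v = "g1 * g1 * adj g3 * adj g5 * adj g3"])
      (intro Gam_generators, intro Gam_mult Gam_adj Gam_generators, simp_all add: mcong_numeral_simps)
next
  case g6
  show ?case
    by (rule approx_2_adic_of_witness[where v = "g1 * g1 * adj g7 * adj g6 * adj g7"])
      (intro Gam_generators, intro Gam_mult Gam_adj Gam_generators, simp_all add: mcong_numeral_simps)
next
  case g7
  show ?case
    by (rule approx_2_adic_of_witness[where v = "adj g7 * adj g7 * adj g7"])
      (intro Gam_generators, intro Gam_mult Gam_adj Gam_generators, simp_all add: mcong_numeral_simps)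
next
  case (mult x y)
  then obtain h1 h2 where "h1 \<in> Gam" "mcong (2 ^ a) h1 x" "mcong (3 ^ b) h1 1"
    "h2 \<in> Gam" "mcong (2 ^ a) h2 y" "mcong (3 ^ b) h2 1" by blast
  then show ?case
    using Gam_mult mcong_mult[of "2 ^ a" h1 x h2 y] mcong_mult[of "3 ^ b" h1 1 h2 1] by (metis mult_1)
next
  case (adj x)
  then obtain h where "h \<in> Gam" "mcong (2 ^ a) h x" "mcong (3 ^ b) h 1" by blast
  then show ?case
    using Gam_adj mcong_adj[of "2 ^ a" h x] mcong_adj[of "3 ^ b" h 1] by (metis adj_one)
qed

section \<open>Reduction modulo \<open>q\<close>\<close>

lemma SL2mod_iff: "X \<in> SL2mod q \<longleftrightarrow> mred q X = X \<and> mcong q (det (of_mat2 X)) 1"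
  unfolding SL2mod_def zs_red_eq_one_iff of_zs_mdet by simp

lemma GammaMod_subset_SL2mod: "GammaMod q \<subseteq> SL2mod q"
proof
  fix X assume "X \<in> GammaMod q"
  then obtain \<gamma> where \<gamma>: "\<gamma> \<in> Gamma" "X = mred q \<gamma>"
    unfolding GammaMod_def by auto
  then have "det (of_mat2 \<gamma>) = 1"
    using Gam_det unfolding Gam_def by blast
  moreover have "mcong q (of_mat2 X) (of_mat2 \<gamma>)"
    unfolding \<gamma>(2) by (rule mcong_mred)
  ultimately have "mcong q (det (of_mat2 X)) 1"
    using mcong_det by metis
  then show "X \<in> SL2mod q"
    unfolding SL2mod_iff \<gamma>(2) by (simp add: mred_idem)
qed

lemma GammaMod_of_mcong:
  assumes "mred q X = X" "g \<in> Gam" "mcong q g (of_mat2 X)"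
  shows "X \<in> GammaMod q"
proof -
  obtain \<gamma> where "\<gamma> \<in> Gamma" "g = of_mat2 \<gamma>"
    using assms(2) unfolding Gam_def by auto
  then have "mred q \<gamma> = X"
    using assms(1,3) mred_eq_iff by metis
  then show ?thesis
    unfolding GammaMod_def using \<open>\<gamma> \<in> Gamma\<close> by blast
qed

theorem GammaMod_eq_SL2mod:
  assumes "q > 0" "gcd q 6 = 1"
  shows "GammaMod q = SL2mod q"
proof
  show "SL2mod q \<subseteq> GammaMod q"
  proof
    fix X assume X: "X \<in> SL2mod q"
    have "coprime q 6"
      using assms(2) by (simp add: coprime_iff_gcd_eq_1)
    then obtain g where "g \<in> Gam" "mcong q g (of_mat2 X)"
      using strong_approximation[of q 1 "of_mat2 X"] X assms(1) by (auto simp: SL2mod_iff)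
    then show "X \<in> GammaMod q"
      using X GammaMod_of_mcong by (auto simp: SL2mod_iff)
  qed
qed (rule GammaMod_subset_SL2mod)

lemma mcong_mI_iff: "mred n X = mI \<longleftrightarrow> mcong n (of_mat2 X) 1" if "mred n mI = mI"
  using mred_eq_iff[of n X mI] that by (simp add: of_mat2_mI)

lemma kernel_GammaMod_eq_kernel_SL2mod:
  assumes lift: "\<And>X. X \<in> SL2mod q \<Longrightarrow> mcong n (of_mat2 X) 1 \<Longrightarrow> \<exists>g\<in>Gam. mcong q g (of_mat2 X)"
    and "mred n mI = mI"
  shows "{X \<in> GammaMod q. mred n X = mI} = {X \<in> SL2mod q. mred n X = mI}"
proof (intro equalityI subsetI; elim CollectE conjE; intro CollectI conjI)
  fix X assume "X \<in> SL2mod q" "mred n X = mI"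
  then show "X \<in> GammaMod q"
    using lift mcong_mI_iff[OF assms(2)] GammaMod_of_mcong by (meson SL2mod_iff)
qed (use GammaMod_subset_SL2mod in auto)

theorem kernel_2_adic:
  assumes "3 \<le> l"
  shows "{X \<in> GammaMod (2 ^ l). mred 8 X = mI} = {X \<in> SL2mod (2 ^ l). mred 8 X = mI}"
proof (rule kernel_GammaMod_eq_kernel_SL2mod)
  fix X assume X: "X \<in> SL2mod (2 ^ l)" "mcong 8 (of_mat2 X) 1"
  show "\<exists>g\<in>Gam. mcong (2 ^ l) g (of_mat2 X)"
  proof (cases "l = 3")
    case True
    then show ?thesis
      using X(2) Gam_one mcong_sym by fastforce
  next
    case False
    then show ?thesis
      using lift_2_adic[of l "of_mat2 X" 0] assms X by (auto simp: SL2mod_iff)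
  qed
qed (simp add: mI_def)

theorem kernel_3_adic:
  assumes "1 \<le> l"
  shows "{X \<in> GammaMod (3 ^ l). mred 3 X = mI} = {X \<in> SL2mod (3 ^ l). mred 3 X = mI}"
proof (rule kernel_GammaMod_eq_kernel_SL2mod)
  fix X assume X: "X \<in> SL2mod (3 ^ l)" "mcong 3 (of_mat2 X) 1"
  show "\<exists>g\<in>Gam. mcong (3 ^ l) g (of_mat2 X)"
  proof (cases "l = 1")
    case True
    then show ?thesis
      using X(2) Gam_one mcong_sym by fastforce
  next
    case False
    then show ?thesis
      using lift_3_adic[of l "of_mat2 X" 0] assms X by (auto simp: SL2mod_iff)
  qed
qed (simp add: mI_def)

lemma dvd_of_prime_power_dvd:
  fixes q n :: int
  assumes "q > 0" "\<And>p. p \<in> prime_factors q \<Longrightarrow> p ^ multiplicity p q dvd n"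
  shows "q dvd n"
proof (cases "n = 0")
  case False
  show ?thesis
  proof (rule multiplicity_le_imp_dvd)
    fix p :: int assume p: "prime p"
    show "multiplicity p q \<le> multiplicity p n"
    proof (cases "p \<in> prime_factors q")
      case True
      then show ?thesis
        using assms(2) p multiplicity_geI[OF False] not_prime_unit by blast
    next
      case False
      then show ?thesis
        using p assms(1) by (auto simp: in_prime_factors_iff not_dvd_imp_multiplicity_0)
    qed
  qed (use assms(1) in simp)
qed simp

lemma mcong_of_prime_power_mcong:
  fixes A B :: mat22
  assumes "q > 0" "\<And>p. p \<in> prime_factors q \<Longrightarrow> mcong (p ^ multiplicity p q) A B"
  shows "mcong q A B"
proof -
  obtain a1 a2 a3 a4 a5 a6 a7 a8 where A: "A = M (Z a1 a2) (Z a3 a4) (Z a5 a6) (Z a7 a8)"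
    by (metis mat22.exhaust zsqrt2.exhaust)
  obtain b1 b2 b3 b4 b5 b6 b7 b8 where B: "B = M (Z b1 b2) (Z b3 b4) (Z b5 b6) (Z b7 b8)"
    by (metis mat22.exhaust zsqrt2.exhaust)
  have H: "p ^ multiplicity p q dvd a1 - b1 \<and> p ^ multiplicity p q dvd a2 - b2
    \<and> p ^ multiplicity p q dvd a3 - b3 \<and> p ^ multiplicity p q dvd a4 - b4
    \<and> p ^ multiplicity p q dvd a5 - b5 \<and> p ^ multiplicity p q dvd a6 - b6
    \<and> p ^ multiplicity p q dvd a7 - b7 \<and> p ^ multiplicity p q dvd a8 - b8"
    if "p \<in> prime_factors q" for p
    using assms(2)[OF that] by (simp add: A B mcong_mat22_iff mcong_zsqrt2_iff)
  show ?thesis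
    unfolding A B mcong_mat22_iff mcong_zsqrt2_iff
    by (intro conjI; rule dvd_of_prime_power_dvd[OF assms(1)]; use H in blast)
qed

lemma prime_power_dvd_cofactor:
  fixes q p r :: int
  assumes "prime p" "prime r" "r \<noteq> p"
  shows "r ^ multiplicity r q dvd q div p ^ multiplicity p q"
proof -
  have "coprime (r ^ multiplicity r q) (p ^ multiplicity p q)"
    using primes_coprime[OF assms(2,1,3)] by simp
  moreover have "r ^ multiplicity r q dvd p ^ multiplicity p q * (q div p ^ multiplicity p q)"
    by (simp add: multiplicity_dvd)
  ultimately show ?thesis
    using coprime_dvd_mult_right_iff by blast
qed

lemma Gam_approx_at_prime:
  assumes "q > 0" "prime p" "p \<noteq> 2" "p \<noteq> 3" "Y \<in> Gam" "C \<in> Gam"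
  shows "\<exists>Y'\<in>Gam. mcong (p ^ multiplicity p q) Y' C \<and> mcong (q div p ^ multiplicity p q) Y' Y"
proof -
  define qp where "qp = p ^ multiplicity p q"
  define Qp where "Qp = q div qp"
  have q: "q = qp * Qp"
    unfolding Qp_def qp_def by (simp add: multiplicity_dvd)
  have "qp > 0"
    unfolding qp_def using assms(2) prime_gt_0_int by simp
  then have "Qp > 0"
    using q assms(1) by (simp add: zero_less_mult_iff)
  have "\<not> p dvd Qp"
    unfolding Qp_def qp_def using assms(1,2) not_prime_unit by (intro multiplicity_decompose) auto
  then have "coprime Qp qp"
    unfolding qp_def using assms(2) prime_imp_coprime coprime_commute coprime_power_right_iff by metis
  have "coprime p 2" "coprime p 3"
    using primes_coprime[OF assms(2), of 2] primes_coprime[OF assms(2), of 3] assms(3,4) by auto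
  then have "coprime qp 6"
    unfolding qp_def using coprime_mult_right_iff[of p 2 3] by simp
  moreover have "det (adj Y * C) = 1"
    using assms(5,6) by (simp add: det_mult det_adj Gam_det)
  ultimately obtain g where g: "g \<in> Gam" "mcong qp g (adj Y * C)" "mcong Qp g 1"
    using strong_approximation[OF _ \<open>coprime Qp qp\<close> \<open>qp > 0\<close> \<open>Qp > 0\<close>, of "adj Y * C"] by auto
  have "mcong qp (Y * g) (Y * (adj Y * C))"
    using mcong_mult[OF mcong_refl g(2)] .
  then have "mcong qp (Y * g) C"
    using Gam_mult_adj[OF assms(5)] by (simp add: mult.assoc[symmetric])
  moreover have "mcong Qp (Y * g) Y"
    using mcong_mult[OF mcong_refl[of _ Y] g(3)] by simp
  ultimately show ?thesis
    unfolding qp_def Qp_def using Gam_mult[OF assms(5) g(1)] by blast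
qed

text \<open>The primes 2 and 3 are handled together by \<open>approx_2_adic\<close>, every other prime by
  strong approximation with the cofactor as auxiliary modulus.\<close>
lemma Gam_chinese_remainder:
  fixes q :: int and C :: "int \<Rightarrow> mat22"
  assumes "q > 0" "\<And>p. C p \<in> Gam"
  shows "\<exists>Y\<in>Gam. \<forall>p\<in>prime_factors q. mcong (p ^ multiplicity p q) Y (C p)"
proof -
  define k where "k p = multiplicity p q" for p
  obtain h where h: "h \<in> Gam" "mcong (2 ^ k 2) h (C 2 * adj (C 3))" "mcong (3 ^ k 3) h 1"
    using approx_2_adic[OF Gam_mult[OF assms(2) Gam_adj[OF assms(2)]]] by blast
  have "mcong (2 ^ k 2) (h * C 3) (C 2 * adj (C 3) * C 3)"
    using mcong_mult[OF h(2) mcong_refl] .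
  then have base: "\<forall>p\<in>{2, 3}. mcong (p ^ k p) (h * C 3) (C p)"
    using mcong_mult[OF h(3) mcong_refl[of _ "C 3"]] Gam_adj_mult[OF assms(2)] by (simp add: mult.assoc)
  define P where "P = prime_factors q - {2, 3}"
  have "finite P" "P \<subseteq> P"
    unfolding P_def by simp_all
  then have "\<exists>Y\<in>Gam. \<forall>p\<in>{2, 3} \<union> P. mcong (p ^ k p) Y (C p)"
  proof (induct P rule: finite_subset_induct')
    case empty
    show ?case using base Gam_mult[OF h(1) assms(2)] by auto
  next
    case (insert p S)
    then obtain Y where Y: "Y \<in> Gam" "\<forall>r\<in>{2, 3} \<union> S. mcong (r ^ k r) Y (C r)"
      by blast
    have p: "prime p" "p \<noteq> 2" "p \<noteq> 3"
      using insert(2) unfolding P_def by auto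
    obtain Y' where Y': "Y' \<in> Gam" "mcong (p ^ k p) Y' (C p)" "mcong (q div p ^ k p) Y' Y"
      using Gam_approx_at_prime[OF assms(1) p Y(1) assms(2)] unfolding k_def by blast
    have "mcong (r ^ k r) Y' (C r)" if "r \<in> {2, 3} \<union> S" for r
    proof -
      have "prime r" "r \<noteq> p"
        using that insert(3,4) p unfolding P_def by auto
      then have "r ^ k r dvd q div p ^ k p"
        unfolding k_def using prime_power_dvd_cofactor p(1) by blast
      then show ?thesis
        using Y'(3) Y(2) that by (meson mcong_dvd mcong_trans)
    qed
    then show ?case
      using Y' by blast
  qed
  then obtain Y where "Y \<in> Gam" "\<forall>p\<in>{2, 3} \<union> P. mcong (p ^ k p) Y (C p)"
    by blast
  moreover have "prime_factors q \<subseteq> {2, 3} \<union> P"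
    unfolding P_def by blast
  ultimately have "\<forall>p\<in>prime_factors q. mcong (p ^ multiplicity p q) Y (C p)"
    unfolding k_def by blast
  from this \<open>Y \<in> Gam\<close> show ?thesis
    by (rule bexI)
qed

theorem GammaMod_chinese_remainder:
  fixes q :: int
  assumes "q > 0"
  shows "bij_betw (\<lambda>X. restrict (\<lambda>p. mred (p ^ multiplicity p q) X) (prime_factors q))
    (GammaMod q) (PiE (prime_factors q) (\<lambda>p. GammaMod (p ^ multiplicity p q)))"
    (is "bij_betw ?f _ _")
proof -
  define k where "k p = multiplicity p q" for p
  have dvd: "p ^ k p dvd q" for p
    unfolding k_def by (rule multiplicity_dvd)
  have "inj_on ?f (GammaMod q)"
  proof (rule inj_onI)
    fix X Y assume XY: "X \<in> GammaMod q" "Y \<in> GammaMod q" "?f X = ?f Y"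
    have "mcong (p ^ k p) (of_mat2 X) (of_mat2 Y)" if "p \<in> prime_factors q" for p
      using fun_cong[OF XY(3), of p] that mred_eq_iff unfolding k_def by simp
    then have "mred q X = mred q Y"
      using mcong_of_prime_power_mcong[OF assms] mred_eq_iff unfolding k_def by blast
    then show "X = Y"
      using XY(1,2) GammaMod_subset_SL2mod by (metis SL2mod_iff subsetD)
  qed
  moreover have "?f ` GammaMod q \<subseteq> PiE (prime_factors q) (\<lambda>p. GammaMod (p ^ multiplicity p q))"
  proof
    fix F assume "F \<in> ?f ` GammaMod q"
    then obtain \<gamma> where "\<gamma> \<in> Gamma" "F = ?f (mred q \<gamma>)"
      unfolding GammaMod_def by blast
    then show "F \<in> PiE (prime_factors q) (\<lambda>p. GammaMod (p ^ multiplicity p q))"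
      unfolding restrict_PiE_iff GammaMod_def using mred_mred[OF dvd] unfolding k_def by auto
  qed
  moreover have "PiE (prime_factors q) (\<lambda>p. GammaMod (p ^ multiplicity p q)) \<subseteq> ?f ` GammaMod q"
  proof
    fix F assume F: "F \<in> PiE (prime_factors q) (\<lambda>p. GammaMod (p ^ multiplicity p q))"
    obtain \<gamma> where \<gamma>: "\<And>p. \<gamma> p \<in> Gamma" "\<And>p. p \<in> prime_factors q \<Longrightarrow> F p = mred (p ^ k p) (\<gamma> p)"
    proof -
      have "\<forall>p\<in>prime_factors q. \<exists>\<gamma>\<in>Gamma. F p = mred (p ^ k p) \<gamma>"
        using PiE_mem[OF F] unfolding GammaMod_def k_def by blast
      then obtain \<gamma> where "\<forall>p\<in>prime_factors q. \<gamma> p \<in> Gamma \<and> F p = mred (p ^ k p) (\<gamma> p)"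
        by metis
      then show thesis
        using that[of "\<lambda>p. if p \<in> prime_factors q then \<gamma> p else mI"] Gamma.id by simp
    qed
    obtain Y where "Y \<in> Gam" "\<forall>p\<in>prime_factors q. mcong (p ^ k p) Y (of_mat2 (\<gamma> p))"
      using Gam_chinese_remainder[OF assms, of "of_mat2 \<circ> \<gamma>"] \<gamma>(1) unfolding Gam_def k_def by auto
    then obtain \<gamma>' where "\<gamma>' \<in> Gamma" "\<forall>p\<in>prime_factors q. mred (p ^ k p) \<gamma>' = F p"
      unfolding Gam_def using \<gamma>(2) mred_eq_iff by auto
    then have "?f (mred q \<gamma>') = F"
      using F PiE_arb[OF F] mred_mred[OF dvd] unfolding k_def by (auto simp: restrict_def)
    then show "F \<in> ?f ` GammaMod q"
      unfolding GammaMod_def using \<open>\<gamma>' \<in> Gamma\<close> by blast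
  qed
  ultimately show ?thesis
    unfolding bij_betw_def by blast
qed

theorem lemma2p5:
  shows
  "(\<forall>q::int. q > 0 \<longrightarrow>
      bij_betw (\<lambda>X. restrict (\<lambda>p. mred (p ^ multiplicity p q) X) (prime_factors q))
        (GammaMod q)
        (PiE (prime_factors q) (\<lambda>p. GammaMod (p ^ multiplicity p q))))
 \<and> (\<forall>q::int. q > 0 \<longrightarrow> gcd q 6 = 1 \<longrightarrow> GammaMod q = SL2mod q)
 \<and> (\<forall>l::nat. l \<ge> 3 \<longrightarrow>
      {X \<in> GammaMod (2 ^ l). mred 8 X = mI} = {X \<in> SL2mod (2 ^ l). mred 8 X = mI})
 \<and> (\<forall>l::nat. l \<ge> 1 \<longrightarrow>
      {X \<in> GammaMod (3 ^ l). mred 3 X = mI} = {X \<in> SL2mod (3 ^ l). mred 3 X = mI})"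
  using GammaMod_chinese_remainder GammaMod_eq_SL2mod kernel_2_adic kernel_3_adic by blast

end
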